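(* Let $\gamma>0$. Define a positive sequence $(a_n)_{n\ge 1}$ by $a_n = a_1\,(n\ln^2 n)^{-1}$ for $n\ge 2$, where $a_1>0$ is chosen so that $\sum_{n=1}^\infty a_n=\gamma/2$. Then the infinite product $$w_\gamma(t)=c_\gamma\prod_{n=1}^\infty\Big(\frac{\sin(a_n t)}{a_n t}\Big)^2$$ defines an even, non-negative function $w_\gamma\in L^1(\mathbb{R})$, and $c_\gamma>0$ can be chosen so that $\int_{\mathbb{R}} w_\gamma(t)\,dt=1$. With this choice, for all $t\ge \mathrm{e}^{1/\sqrt2}/\gamma$, $$0\le w_\gamma(t)\le 2(\mathrm{e}\gamma)^2\, t\,\exp\Big(-\frac{2}{7}\,\frac{\gamma t}{\ln^2(\gamma t)}\Big).$$ *)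

theory Defs
  imports "HOL-Analysis.Analysis"
begin

definition sinc :: "real \<Rightarrow> real" where
  "sinc x = (if x = 0 then 1 else sin x / x)"

definition wprod :: "(nat \<Rightarrow> real) \<Rightarrow> real \<Rightarrow> real" where
  "wprod a t = (\<Prod>n. (sinc (a (Suc n) * t))\<^sup>2)"

end

theory Submission
  imports Defs
begin

(* Every factor (sinc (a n t))^2 lies between 1 - (a n t)^2/3 and 1, and a is summable,
   so the product converges, is at most 1, and is at least 2/3 for |t| <= 2/gamma; hence
   its integral is at least 8/(3 gamma) and the normalising constant is at most 3 gamma/8.
   For the tail, let N be the integer part of a_1 t / ln^2 (a_1 t).  For n <= N one has
   a_n t >= N/n, so the first N factors are at most (n/N)^2 and the product is at most
   (N!/N^N)^2 <= N e^(2-2N) by a Stirling-type bound.  Finally a_1 <= gamma/2, and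
   a_1 >= gamma/7 because the partial sums of 1/(n ln^2 n) stay below 5/2 by telescoping
   against 1/ln n; this converts a_1 t into gamma t at the cost of the constant 2/7. *)

section \<open>Elementary inequalities\<close>

lemma cos_ge_1_minus_sq_half: "1 - x^2/2 \<le> cos (x::real)"
proof -
  have "cos x = 1 - 2 * (sin (x/2))^2" using cos_double_sin[of "x/2"] by simp
  moreover have "(sin (x/2))^2 \<le> (x/2)^2"
    using abs_sin_x_le_abs_x[of "x/2"] abs_le_square_iff by blast
  ultimately show ?thesis by (simp add: power_divide)
qed

lemma sin_ge_minus_cube: assumes "0 \<le> x" shows "x - x^3/6 \<le> sin (x::real)"
proof -
  let ?h = "\<lambda>x::real. sin x - x + x^3/6"
  have "?h 0 \<le> ?h x"
  proof (rule DERIV_nonneg_imp_nondecreasing[OF assms])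
    fix y :: real
    have "(?h has_real_derivative (cos y - 1 + y^2/2)) (at y)"
      by (auto intro!: derivative_eq_intros simp: power2_eq_square)
    moreover have "0 \<le> cos y - 1 + y^2/2" using cos_ge_1_minus_sq_half[of y] by simp
    ultimately show "\<exists>d. (?h has_real_derivative d) (at y) \<and> 0 \<le> d" by blast
  qed
  then show ?thesis by simp
qed

lemma ln_add_one_ge_Pade: assumes "0 \<le> u" shows "2*u/(2+u) \<le> ln (1 + (u::real))"
proof -
  let ?h = "\<lambda>u::real. ln (1+u) - 2*u/(2+u)"
  have "?h 0 \<le> ?h u"
  proof (rule DERIV_nonneg_imp_nondecreasing[OF assms])
    fix y :: real assume y: "0 \<le> y" "y \<le> u"
    have "(?h has_real_derivative (1/(1+y) - 4/(2+y)^2)) (at y)"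
      using y by (auto intro!: derivative_eq_intros simp: power2_eq_square)
    moreover have "1/(1+y) - 4/(2+y)^2 = y^2 / ((1+y)*(2+y)^2)"
      using y by (simp add: divide_simps) (simp add: power2_eq_square algebra_simps)
    then have "0 \<le> 1/(1+y) - 4/(2+y)^2" using y by simp
    ultimately show "\<exists>d. (?h has_real_derivative d) (at y) \<and> 0 \<le> d" by blast
  qed
  then show ?thesis by simp
qed

lemma inverse_Suc_le_ln_diff: assumes "K \<ge> 1" shows "1/(K+1) \<le> ln (K+1) - ln (K::real)"
proof -
  have "ln (K/(K+1)) \<le> K/(K+1) - 1" using assms by (intro ln_le_minus_one) simp
  moreover have "ln (K/(K+1)) = ln K - ln (K+1)" using assms by (simp add: ln_div)
  moreover have "K/(K+1) - 1 = -1/(K+1)" using assms by (simp add: field_simps)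
  ultimately show ?thesis by simp
qed

lemma inverse_mult_ln_sq_le_diff:
  assumes "K \<ge> 2" shows "1/((K+1) * (ln (K+1))^2) \<le> 1/ln K - 1/ln (K+1::real)"
proof -
  define u where "u = ln (K+1)"
  define v where "v = ln K"
  have v0: "0 < v" using assms by (simp add: v_def)
  have vu: "v < u" using assms by (simp add: u_def v_def)
  have d: "1/(K+1) \<le> u - v" using inverse_Suc_le_ln_diff[of K] assms by (simp add: u_def v_def)
  have "1/((K+1) * u^2) = (1/(K+1)) / u^2" by simp
  also have "\<dots> \<le> (u - v) / u^2" using d by (intro divide_right_mono) simp_all
  also have "\<dots> \<le> (u - v) / (u * v)" using v0 vu d
    by (intro divide_left_mono) (auto simp: power2_eq_square intro: mult_left_mono)
  also have "\<dots> = 1/v - 1/u" using v0 vu by (simp add: field_simps)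
  finally show ?thesis by (simp add: u_def v_def)
qed

lemma initial_terms_le_7_half: "1 + 1/(2*(ln 2)^2) + 1/(3*(ln 3)^2) + 1/ln 3 \<le> (7/2::real)"
proof -
  have l2: "2/3 \<le> ln (2::real)" by (rule ln2_ge_two_thirds)
  have l3: "1 \<le> ln (3::real)" using exp_le by (simp add: ln_ge_iff)
  have "(2/3)^2 \<le> (ln (2::real))^2" using l2 by (intro power_mono) simp_all
  then have "1/(2*(ln 2)^2) \<le> 1/(2*(2/3)^2::real)"
    by (intro divide_left_mono) (simp_all add: power2_eq_square)
  then have "1/(2*(ln 2)^2) \<le> (9/8::real)" by (simp add: power2_eq_square)
  moreover have "1/(3*(ln 3)^2) \<le> 1/(3::real)"
    using l3 by (intro divide_left_mono) (simp_all add: one_le_power)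
  moreover have "1/ln 3 \<le> (1::real)" using l3 by simp
  ultimately show ?thesis by linarith
qed

lemma exp_2_le_9: "exp (2::real) \<le> 9"
proof -
  have "exp (2::real) = exp 1 * exp 1" by (simp flip: exp_add)
  also have "\<dots> \<le> 3 * 3" using exp_le by (intro mult_mono) simp_all
  finally show ?thesis by simp
qed

lemma div_ln_sq_le_of_ln_ge:
  fixes x :: real assumes "0 < x" "0 < l" "l \<le> ln x" shows "x/(ln x)^2 \<le> x/l^2"
  using assms by (intro divide_left_mono power_mono mult_pos_pos) auto

lemma div_ln_sq_le_21_half:
  fixes x :: real
  assumes x1: "exp (1 / sqrt 2) \<le> x" and x2: "x \<le> 7 * exp 1"
  shows "x/(ln x)^2 \<le> 21/2"
proof -
  have x0: "0 < x" using x1 by (meson exp_gt_zero less_le_trans)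
  have e3: "exp 1 \<le> (3::real)" by (rule exp_le)
  consider "x \<le> exp 1" | "exp 1 < x" "x \<le> exp 2" | "exp 2 < x" by linarith
  then show ?thesis
  proof cases
    case 1
    have "1 / sqrt 2 \<le> ln x" using x1 x0 by (simp add: ln_ge_iff)
    then have "x/(ln x)^2 \<le> x/(1/sqrt 2)^2" by (intro div_ln_sq_le_of_ln_ge) (use x0 in auto)
    also have "\<dots> = 2 * x" by (simp add: power_divide)
    finally show ?thesis using 1 e3 by linarith
  next
    case 2
    have "1 \<le> ln x" using 2 x0 by (simp add: ln_ge_iff)
    then have "x/(ln x)^2 \<le> x" using div_ln_sq_le_of_ln_ge[of x 1] x0 by simp
    then show ?thesis using 2 exp_2_le_9 by linarith
  next
    case 3
    have "2 \<le> ln x" using 3 x0 by (simp add: ln_ge_iff)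
    then have "x/(ln x)^2 \<le> x/4" using div_ln_sq_le_of_ln_ge[of x 2] x0 by simp
    then show ?thesis using x2 e3 by linarith
  qed
qed

lemma ln_fact_le: "n \<ge> 1 \<Longrightarrow> ln (fact n) \<le> (real n + 1/2) * ln (real n) - real n + 1"
proof (induction n rule: dec_induct)
  case base then show ?case by simp
next
  case (step n)
  have n1: "real n \<ge> 1" using step by simp
  have "2/(2*real n + 1) = 2*(1/real n)/(2 + 1/real n)" using n1 by (simp add: field_simps)
  also have "\<dots> \<le> ln (1 + 1/real n)" by (rule ln_add_one_ge_Pade) simp
  also have "ln (1 + 1/real n) = ln (real n + 1) - ln (real n)"
    using n1 by (simp add: field_simps ln_div)
  finally have "(real n + 1/2) * (2/(2*real n + 1)) \<le> (real n + 1/2) * (ln (real n + 1) - ln (real n))"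
    using n1 by (intro mult_left_mono) simp_all
  moreover have "(real n + 1/2) * (2/(2*real n + 1)) = 1" using n1 by (simp add: field_simps)
  ultimately have key: "1 \<le> (real n + 1/2) * (ln (real n + 1) - ln (real n))" by linarith
  have "ln (fact (Suc n)) = ln (fact n) + ln (real n + 1)"
    using n1 by (simp add: ln_mult add.commute)
  also have "\<dots> \<le> (real n + 1/2) * ln (real n) - real n + 1 + ln (real n + 1)" using step by simp
  also have "\<dots> \<le> (real (Suc n) + 1/2) * ln (real (Suc n)) - real (Suc n) + 1"
    using key by (simp add: algebra_simps)
  finally show ?case .
qed

lemma fact_div_power_sq_le: assumes "N \<ge> 1"
  shows "(fact N / real N ^ N)^2 \<le> real N * exp (2 - 2 * real N)"
proof -
  define q where "q = fact N / real N ^ N"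
  have q0: "q > 0" using assms by (simp add: q_def)
  have "ln q = ln (fact N) - real N * ln (real N)"
    using assms by (simp add: q_def ln_div ln_realpow)
  also have "\<dots> \<le> 1/2 * ln (real N) - real N + 1"
    using ln_fact_le[OF assms] by (simp add: algebra_simps)
  finally have "2 * ln q \<le> ln (real N) + (2 - 2 * real N)" by simp
  then have "exp (2 * ln q) \<le> exp (ln (real N) + (2 - 2 * real N))" by simp
  moreover have "exp (2 * ln q) = q^2" using q0 by (simp add: exp_of_nat_mult[of 2, simplified])
  ultimately show ?thesis using assms by (simp add: exp_add q_def)
qed

lemma prod_Suc_div_sq: "(\<Prod>i<N. (real (Suc i) / real N)^2) = (fact N / real N ^ N)^2"
proof -
  have "(\<Prod>i<N. real (Suc i)) = fact N" by (simp add: fact_prod_Suc atLeast0LessThan)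
  then have "(\<Prod>i<N. real (Suc i) / real N) = fact N / real N ^ N" by (simp add: prod_dividef)
  then show ?thesis by (simp flip: prod_power_distrib)
qed

section \<open>Bounds for sinc\<close>

lemma sinc_minus: "sinc (-x) = sinc x" by (simp add: sinc_def)

lemma sinc_measurable[measurable]: "sinc \<in> borel_measurable borel"
  unfolding sinc_def by measurable

lemma sinc_ge: "1 - x^2/6 \<le> sinc x"
proof -
  have "1 - \<bar>x\<bar>^2/6 \<le> sinc \<bar>x\<bar>"
  proof (cases "x = 0")
    case False
    then have "(\<bar>x\<bar> - \<bar>x\<bar>^3/6)/\<bar>x\<bar> \<le> sin \<bar>x\<bar> / \<bar>x\<bar>"
      using sin_ge_minus_cube[of "\<bar>x\<bar>"] by (simp add: divide_right_mono)
    moreover have "(\<bar>x\<bar> - \<bar>x\<bar>^3/6)/\<bar>x\<bar> = 1 - \<bar>x\<bar>^2/6"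
      using False by (simp add: field_simps power2_eq_square power3_eq_cube)
    ultimately show ?thesis using False by (simp add: sinc_def)
  qed (simp add: sinc_def)
  moreover have "sinc \<bar>x\<bar> = sinc x" by (simp add: abs_if sinc_minus)
  ultimately show ?thesis by simp
qed

lemma sinc_sq_ge: "1 - x^2/3 \<le> (sinc x)^2"
proof (cases "x^2 \<le> 3")
  case True
  then have "(1 - x^2/6)^2 \<le> (sinc x)^2" using sinc_ge[of x] by (intro power_mono) simp_all
  moreover have "(1 - x^2/6)^2 = 1 - x^2/3 + (x^2)^2/36" by (simp add: power2_eq_square algebra_simps)
  moreover have "0 \<le> (x^2)^2" by simp
  ultimately show ?thesis by linarith
next
  case False
  then show ?thesis using zero_le_power2[of "sinc x"] by linarith
qed

lemma sinc_sq_le_1: "(sinc x)^2 \<le> 1"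
proof -
  have "\<bar>sinc x\<bar> \<le> 1"
    using abs_sin_x_le_abs_x[of x] by (auto simp: sinc_def abs_divide divide_le_eq_1)
  then show ?thesis by (simp add: abs_square_le_1)
qed

lemma sinc_sq_le_inverse_sq: assumes "x \<noteq> 0" shows "(sinc x)^2 \<le> 1/x^2"
proof -
  have "(sin x)^2 \<le> 1" by (simp add: abs_square_le_1)
  then have "(sin x)^2 / x^2 \<le> 1/x^2" by (rule divide_right_mono) simp
  then show ?thesis using assms by (simp add: sinc_def power_divide)
qed

lemma sinc_sq_le_Lorentzian: "(sinc x)^2 \<le> 2 * inverse (1 + x^2)"
proof (cases "x^2 \<le> 1")
  case True
  then have "1/2 \<le> inverse (1 + x^2)"
    using le_imp_inverse_le[of "1 + x^2" 2] by (simp add: add_pos_nonneg inverse_eq_divide)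
  then show ?thesis using sinc_sq_le_1[of x] by linarith
next
  case False
  then have "x \<noteq> 0" by auto
  have "1 + x^2 \<le> 2 * x^2" using False by simp
  then have "1/x^2 \<le> 2 * inverse (1 + x^2)"
    using \<open>x \<noteq> 0\<close> by (simp add: field_simps add_pos_nonneg)
  then show ?thesis using sinc_sq_le_inverse_sq[OF \<open>x \<noteq> 0\<close>] by linarith
qed

lemma integrable_inverse_1_plus_sq: "integrable lborel (\<lambda>x::real. inverse (1 + x^2))"
proof -
  have "set_integrable lborel (einterval (-\<infinity>) \<infinity>) (\<lambda>x::real. inverse (1 + x^2))"
    by (rule interval_integral_FTC_nonneg[where F = arctan and A = "-(pi/2)" and B = "pi/2"])
       (auto intro!: derivative_eq_intros continuous_intros
             simp: ereal_tendsto_simps tendsto_arctan_at_top tendsto_arctan_at_bot add_nonneg_eq_0_iff)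
  then show ?thesis by (simp add: set_integrable_def einterval_def)
qed

section \<open>The sequence a\<close>

locale sinc_product =
  fixes \<gamma> :: real and a :: "nat \<Rightarrow> real"
  assumes gamma_pos: "\<gamma> > 0" and a_1_pos: "a 1 > 0"
    and a_eq: "\<And>n. n \<ge> 2 \<Longrightarrow> a n = a 1 / (real n * (ln (real n))\<^sup>2)"
    and a_sums: "(\<lambda>n. a (Suc n)) sums (\<gamma>/2)"
begin

lemma a_Suc_pos: "a (Suc n) > 0"
proof (cases "Suc n \<ge> 2")
  case True
  then show ?thesis using a_eq[OF True] a_1_pos by simp
qed (use a_1_pos in \<open>simp add: not_le less_Suc_eq\<close>)

lemma a_summable: "summable (\<lambda>n. a (Suc n))"
  using a_sums by (rule sums_summable)

lemma sum_a_le_half_gamma: "finite I \<Longrightarrow> (\<Sum>i\<in>I. a (Suc i)) \<le> \<gamma>/2"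
  using sum_le_suminf[OF a_summable] a_Suc_pos sums_unique[OF a_sums] by (simp add: less_imp_le)

lemma a_le_half_gamma: "a (Suc n) \<le> \<gamma>/2"
  using sum_a_le_half_gamma[of "{n}"] by simp

(* Telescoping against 1/ln n starts only at n = 4, so that the crude bounds ln 2 >= 2/3
   and ln 3 >= 1 keep the constant below 7/2. *)
lemma sum_a_telescope:
  "M \<ge> 3 \<Longrightarrow>
     (\<Sum>i<M. a (Suc i)) + a 1 / ln (real M) \<le> a 1 * (1 + 1/(2*(ln 2)^2) + 1/(3*(ln 3)^2) + 1/ln 3)"
proof (induction M rule: dec_induct)
  case base
  have "(\<Sum>i<3. a (Suc i)) = a 1 + a 2 + a 3" by (simp add: eval_nat_numeral)
  then show ?case using a_eq[of 2] a_eq[of 3] by (simp add: algebra_simps)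
next
  case (step M)
  have "a (Suc M) = a 1 * (1/((real M + 1) * (ln (real M + 1))^2))"
    using a_eq[of "Suc M"] step by (simp add: add.commute)
  also have "\<dots> \<le> a 1 * (1/ln (real M) - 1/ln (real M + 1))"
    using inverse_mult_ln_sq_le_diff[of "real M"] step a_1_pos by (intro mult_left_mono) simp_all
  finally show ?case using step by (simp add: algebra_simps add.commute)
qed

lemma sum_a_le: "(\<Sum>i<M. a (Suc i)) \<le> 7/2 * a 1"
proof -
  have "(\<Sum>i<M. a (Suc i)) \<le> (\<Sum>i<max M 3. a (Suc i))"
    using a_Suc_pos by (intro sum_mono2) (auto simp: less_imp_le)
  also have "\<dots> \<le> a 1 * (1 + 1/(2*(ln 2)^2) + 1/(3*(ln 3)^2) + 1/ln 3)"
  proof -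
    have "0 < ln (real (max M 3))" by simp
    then have "0 \<le> a 1 / ln (real (max M 3))" using a_1_pos by simp
    then show ?thesis using sum_a_telescope[of "max M 3"] by simp
  qed
  also have "\<dots> \<le> 7/2 * a 1" using initial_terms_le_7_half a_1_pos by simp
  finally show ?thesis .
qed

lemma a_1_ge: "\<gamma>/7 \<le> a 1"
proof -
  have "(\<lambda>M. \<Sum>i<M. a (Suc i)) \<longlonglongrightarrow> \<gamma>/2" using a_sums by (simp add: sums_def)
  then have "\<gamma>/2 \<le> 7/2 * a 1" by (rule LIMSEQ_le_const2) (use sum_a_le in auto)
  then show ?thesis by simp
qed

section \<open>The infinite product\<close>

lemma sinc_sq_factor_dist_1: "norm ((sinc (a (Suc i) * t))^2 - 1) \<le> (\<gamma>/6 * t^2) * a (Suc i)"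
proof -
  have "(a (Suc i))^2 \<le> \<gamma>/2 * a (Suc i)"
    using a_le_half_gamma[of i] a_Suc_pos[of i] by (simp add: power2_eq_square)
  then have "(a (Suc i))^2 * t^2 \<le> \<gamma>/2 * a (Suc i) * t^2" by (rule mult_right_mono) simp
  then have "(a (Suc i) * t)^2/3 \<le> (\<gamma>/6 * t^2) * a (Suc i)"
    by (simp add: power_mult_distrib algebra_simps)
  moreover have "norm ((sinc (a (Suc i) * t))^2 - 1) = 1 - (sinc (a (Suc i) * t))^2"
    using sinc_sq_le_1 by simp
  ultimately show ?thesis using sinc_sq_ge[of "a (Suc i) * t"] by linarith
qed

lemma convergent_prod_sinc_sq: "convergent_prod (\<lambda>n. (sinc (a (Suc n) * t))^2)"
proof -
  have "summable (\<lambda>i. norm ((sinc (a (Suc i) * t))^2 - 1))"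
    by (rule summable_comparison_test'[where N=0, OF summable_mult[OF a_summable, of "\<gamma>/6 * t^2"]])
       (use sinc_sq_factor_dist_1 in simp)
  then show ?thesis
    by (intro abs_convergent_prod_imp_convergent_prod summable_imp_abs_convergent_prod)
qed

lemma wprod_LIMSEQ: "(\<lambda>n. \<Prod>i\<le>n. (sinc (a (Suc i) * t))^2) \<longlonglongrightarrow> wprod a t"
  unfolding wprod_def by (rule convergent_prod_LIMSEQ[OF convergent_prod_sinc_sq])

lemma wprod_nonneg: "0 \<le> wprod a t"
  by (rule LIMSEQ_le_const[OF wprod_LIMSEQ]) (intro exI allI impI prod_nonneg, simp)

lemma wprod_le_partial_prod: "wprod a t \<le> (\<Prod>i<N. (sinc (a (Suc i) * t))^2)"
  unfolding wprod_def
proof (rule prodinf_le_const[OF convergent_prod_sinc_sq])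
  fix n assume "N \<le> n"
  then show "(\<Prod>i<n. (sinc (a (Suc i) * t))^2) \<le> (\<Prod>i<N. (sinc (a (Suc i) * t))^2)"
  proof (induction n rule: dec_induct)
    case (step n)
    have "(\<Prod>i<Suc n. (sinc (a (Suc i) * t))^2) = (\<Prod>i<n. (sinc (a (Suc i) * t))^2) * (sinc (a (Suc n) * t))^2"
      by simp
    also have "\<dots> \<le> (\<Prod>i<n. (sinc (a (Suc i) * t))^2) * 1"
      by (intro mult_left_mono sinc_sq_le_1 prod_nonneg) simp
    then show ?case using step by simp
  qed simp
qed

lemma wprod_le_1: "wprod a t \<le> 1"
  using wprod_le_partial_prod[of t 0] by simp

lemma wprod_minus: "wprod a (-t) = wprod a t"
  unfolding wprod_def by (simp add: sinc_minus[of "_ * t", simplified])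

lemma wprod_ge_two_thirds: assumes "\<bar>t\<bar> \<le> 2/\<gamma>" shows "2/3 \<le> wprod a t"
proof (rule LIMSEQ_le_const[OF wprod_LIMSEQ], intro exI allI impI)
  fix n :: nat
  define u where "u i = (a (Suc i) * t)^2/3" for i
  have at_le_1: "a (Suc i) * \<bar>t\<bar> \<le> 1" for i
  proof -
    have "a (Suc i) * \<bar>t\<bar> \<le> \<gamma>/2 * (2/\<gamma>)"
      using a_le_half_gamma[of i] a_Suc_pos[of i] assms by (intro mult_mono) simp_all
    then show ?thesis using gamma_pos by simp
  qed
  have u_le: "u i \<le> a (Suc i) * \<bar>t\<bar> / 3" for i
  proof -
    have "(a (Suc i) * t)^2 = (a (Suc i) * \<bar>t\<bar>) * (a (Suc i) * \<bar>t\<bar>)"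
      by (simp add: power2_eq_square)
    also have "\<dots> \<le> (a (Suc i) * \<bar>t\<bar>) * 1"
      using at_le_1[of i] a_Suc_pos[of i] by (intro mult_left_mono) simp_all
    finally show ?thesis by (simp add: u_def)
  qed
  have u01: "u i \<in> {0..1}" for i
    using u_le[of i] at_le_1[of i] by (simp add: u_def)
  have "sum u {..n} \<le> (\<Sum>i\<le>n. a (Suc i)) * \<bar>t\<bar> / 3"
    using sum_mono[of "{..n}" u, OF u_le] by (simp add: sum_divide_distrib sum_distrib_right)
  also have "\<dots> \<le> (\<gamma>/2) * (2/\<gamma>) / 3"
    using sum_a_le_half_gamma[of "{..n}"] assms a_Suc_pos gamma_pos
    by (intro divide_right_mono mult_mono) (auto intro: sum_nonneg less_imp_le)
  also have "\<dots> = 1/3" using gamma_pos by simp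
  finally have "2/3 \<le> 1 - sum u {..n}" by simp
  also have "\<dots> \<le> (\<Prod>i\<le>n. 1 - u i)" by (rule Weierstrass_prod_ineq) (use u01 in simp)
  also have "\<dots> \<le> (\<Prod>i\<le>n. (sinc (a (Suc i) * t))^2)"
    using u01 by (intro prod_mono) (simp add: u_def sinc_sq_ge)
  finally show "2/3 \<le> (\<Prod>i\<le>n. (sinc (a (Suc i) * t))^2)" .
qed

section \<open>Integrability and the normalising constant\<close>

lemma wprod_measurable: "wprod a \<in> borel_measurable lborel"
  by (rule borel_measurable_LIMSEQ_real[OF wprod_LIMSEQ]) measurable

lemma integrable_wprod: "integrable lborel (wprod a)"
proof (rule Bochner_Integration.integrable_bound[OF _ wprod_measurable])
  have "integrable lborel (\<lambda>x::real. inverse (1 + x^2))" by (rule integrable_inverse_1_plus_sq)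
  then have "integrable lborel (\<lambda>x. inverse (1 + (0 + a 1 * x)^2))"
    using a_1_pos by (intro lborel_integrable_real_affine) auto
  then show "integrable lborel (\<lambda>x. 2 * inverse (1 + (a 1 * x)^2))" by simp
  show "AE x in lborel. norm (wprod a x) \<le> norm (2 * inverse (1 + (a 1 * x)^2))"
  proof (intro AE_I2)
    fix x
    have "wprod a x \<le> 2 * inverse (1 + (a 1 * x)^2)"
      using wprod_le_partial_prod[of x 1] sinc_sq_le_Lorentzian[of "a 1 * x"] by simp
    then show "norm (wprod a x) \<le> norm (2 * inverse (1 + (a 1 * x)^2))"
      using wprod_nonneg[of x] by (simp add: add_nonneg_nonneg)
  qed
qed

lemma integral_wprod_ge: "8/(3*\<gamma>) \<le> integral\<^sup>L lborel (wprod a)"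
proof -
  let ?S = "{-2/\<gamma>..2/\<gamma>}"
  have "integral\<^sup>L lborel (\<lambda>t. 2/3 * indicator ?S t) \<le> integral\<^sup>L lborel (wprod a)"
  proof (rule integral_mono[OF _ integrable_wprod])
    show "integrable lborel (\<lambda>t. 2/3 * indicator ?S t :: real)"
      using gamma_pos by (intro integrable_mult_right integrable_real_indicator) (simp_all add: emeasure_lborel_Icc)
    show "2/3 * indicator ?S t \<le> wprod a t" for t
      using wprod_ge_two_thirds[of t] wprod_nonneg[of t] by (auto simp: indicator_def abs_le_iff)
  qed
  moreover have "integral\<^sup>L lborel (\<lambda>t. 2/3 * indicator ?S t) = 8/(3*\<gamma>)"
    using gamma_pos by (simp add: measure_lborel_Icc)
  ultimately show ?thesis by simp
qed

lemma normalising_constant_exists: "\<exists>c>0. (\<integral>t. c * wprod a t \<partial>lborel) = 1"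
proof -
  have "0 < integral\<^sup>L lborel (wprod a)"
    using integral_wprod_ge gamma_pos by (smt (verit) divide_pos_pos)
  then show ?thesis by (intro exI[of _ "1 / integral\<^sup>L lborel (wprod a)"]) simp
qed

lemma normalising_constant_le:
  assumes "c > 0" "(\<integral>t. c * wprod a t \<partial>lborel) = 1" shows "c \<le> 3*\<gamma>/8"
proof -
  have "c * integral\<^sup>L lborel (wprod a) = 1" using assms(2) by simp
  moreover have "c * (8/(3*\<gamma>)) \<le> c * integral\<^sup>L lborel (wprod a)"
    using integral_wprod_ge assms(1) by (intro mult_left_mono) simp_all
  ultimately show ?thesis using gamma_pos by (simp add: field_simps)
qed

section \<open>Decay of the product\<close>

lemma ratio_le_a_mul:
  assumes "1 \<le> n" "n \<le> N" and e: "exp 1 \<le> a 1 * t"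
    and N_le: "real N \<le> (a 1 * t) / (ln (a 1 * t))^2"
  shows "real N / real n \<le> a n * t"
proof -
  define y where "y = a 1 * t"
  have y0: "0 < y" using e by (simp add: y_def) (meson exp_gt_zero less_le_trans)
  have ln_ge: "1 \<le> ln y" using e y0 by (simp add: y_def ln_ge_iff)
  have Ny: "real N \<le> y"
    using N_le div_ln_sq_le_of_ln_ge[of y 1] ln_ge y0 by (simp add: y_def)
  show ?thesis
  proof (cases "n = 1")
    case True
    then show ?thesis using Ny by (simp add: y_def)
  next
    case False
    then have n2: "n \<ge> 2" using assms(1) by simp
    have ln0: "0 < ln (real n)" using n2 by simp
    have "ln (real n) \<le> ln y" using assms(2) Ny n2 y0 by simp
    then have "(ln (real n))^2 \<le> (ln y)^2" using ln0 by (intro power_mono) simp_all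
    then have "real N * (ln (real n))^2 \<le> y / (ln y)^2 * (ln y)^2"
      using N_le by (intro mult_mono) (simp_all add: y_def)
    then have A: "real N * (ln (real n))^2 \<le> y" using ln_ge by (simp add: y_def)
    have "real N / real n = (real N * (ln (real n))^2) / (real n * (ln (real n))^2)"
      using ln0 by simp
    also have "\<dots> \<le> y / (real n * (ln (real n))^2)"
      using A n2 ln0 by (intro divide_right_mono) simp_all
    also have "\<dots> = a n * t" using a_eq[OF n2] by (simp add: y_def)
    finally show ?thesis .
  qed
qed

lemma wprod_le_fact_div_power_sq:
  assumes "exp 1 \<le> a 1 * t" "real N \<le> (a 1 * t) / (ln (a 1 * t))^2"
  shows "wprod a t \<le> (fact N / real N ^ N)^2"
proof -
  have "(sinc (a (Suc i) * t))^2 \<le> (real (Suc i) / real N)^2" if "i < N" for i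
  proof -
    have key: "real N / real (Suc i) \<le> a (Suc i) * t"
      using ratio_le_a_mul[of "Suc i" N t] that assms by simp
    have p: "0 < real N / real (Suc i)" using that by simp
    then have p': "0 < a (Suc i) * t" using key by linarith
    have "(sinc (a (Suc i) * t))^2 \<le> 1 / (a (Suc i) * t)^2"
      by (rule sinc_sq_le_inverse_sq) (use p' in linarith)
    also have "\<dots> \<le> 1 / (real N / real (Suc i))^2"
      using key p p' that by (intro divide_left_mono power_mono mult_pos_pos) auto
    also have "\<dots> = (real (Suc i) / real N)^2" by (simp add: power_divide)
    finally show ?thesis .
  qed
  then have "(\<Prod>i<N. (sinc (a (Suc i) * t))^2) \<le> (\<Prod>i<N. (real (Suc i) / real N)^2)"
    by (intro prod_mono) simp
  then have "(\<Prod>i<N. (sinc (a (Suc i) * t))^2) \<le> (fact N / real N ^ N)^2"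
    by (simp only: prod_Suc_div_sq)
  then show ?thesis using wprod_le_partial_prod[of t N] by linarith
qed

lemma wprod_le_exp:
  assumes "exp 1 \<le> a 1 * t"
  defines "M \<equiv> (a 1 * t) / (ln (a 1 * t))^2"
  shows "wprod a t \<le> exp 4 * max 1 M * exp (-2*M)"
proof -
  have y0: "0 < a 1 * t" using assms(1) by (meson exp_gt_zero less_le_trans)
  have ln_ge: "1 \<le> ln (a 1 * t)" using assms(1) y0 by (simp add: ln_ge_iff)
  then have M0: "0 < M" unfolding M_def using y0 by (intro divide_pos_pos) auto
  define N where "N = nat \<lfloor>M\<rfloor>"
  have NM: "real N \<le> M" "M < real N + 1" using M0 by (simp_all add: N_def)
  show ?thesis
  proof (cases "N = 0")
    case True
    then have "1 \<le> exp (4 - 2*M)" using NM by simp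
    also have "\<dots> = exp 4 * 1 * exp (-2*M)" by (simp add: exp_diff exp_minus field_simps)
    finally show ?thesis using wprod_le_1[of t] NM True by simp
  next
    case False
    then have N1: "N \<ge> 1" by simp
    have "wprod a t \<le> (fact N / real N ^ N)^2"
      using wprod_le_fact_div_power_sq[OF assms(1)] NM by (simp add: M_def)
    also have "\<dots> \<le> real N * exp (2 - 2 * real N)" by (rule fact_div_power_sq_le[OF N1])
    also have "\<dots> \<le> M * exp (2 - 2 * (M - 1))" using NM by (intro mult_mono) simp_all
    also have "\<dots> = exp 4 * M * exp (-2*M)" by (simp add: exp_add[symmetric] algebra_simps)
    also have "\<dots> \<le> exp 4 * max 1 M * exp (-2*M)" by (intro mult_right_mono mult_left_mono) simp_all
    finally show ?thesis .
  qed
qed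

lemma normalised_wprod_le_near:
  assumes c: "0 < c" "c \<le> 3*\<gamma>/8"
    and x: "exp (1 / sqrt 2) \<le> \<gamma> * t" "\<gamma> * t \<le> 7 * exp 1"
  shows "c * wprod a t \<le> 2 * exp 2 * \<gamma> * (\<gamma> * t) * exp (- (2 / 7) * (\<gamma> * t) / (ln (\<gamma> * t))\<^sup>2)"
proof -
  let ?E = "exp (- (2 / 7) * (\<gamma> * t) / (ln (\<gamma> * t))\<^sup>2)"
  have "1 \<le> exp (1 / sqrt (2::real))" by simp
  then have x1: "1 \<le> \<gamma> * t" using x by linarith
  have "- (2 / 7) * (\<gamma> * t) / (ln (\<gamma> * t))\<^sup>2 = - (2 / 7) * ((\<gamma> * t) / (ln (\<gamma> * t))\<^sup>2)"
    by simp
  then have "-3 \<le> - (2 / 7) * (\<gamma> * t) / (ln (\<gamma> * t))\<^sup>2"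
    using div_ln_sq_le_21_half[OF x] by linarith
  then have "exp 2 * exp (-3) \<le> exp 2 * ?E" by simp
  moreover have "exp 2 * exp (-3::real) = inverse (exp 1)" by (simp flip: exp_add exp_minus)
  moreover have "1/3 \<le> inverse (exp (1::real))" using exp_le by (simp add: field_simps)
  ultimately have "1/3 \<le> exp 2 * ?E * 1" by linarith
  also have "\<dots> \<le> exp 2 * ?E * (\<gamma> * t)" using x1 by (intro mult_left_mono) simp_all
  finally have "2 * \<gamma> * (1/3) \<le> 2 * \<gamma> * (exp 2 * ?E * (\<gamma> * t))"
    using gamma_pos by (intro mult_left_mono) simp_all
  moreover have "2 * \<gamma> * (exp 2 * ?E * (\<gamma> * t)) = 2 * exp 2 * \<gamma> * (\<gamma> * t) * ?E"
    by (simp add: mult_ac)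
  moreover have "c * wprod a t \<le> c * 1" using c wprod_le_1[of t] by (intro mult_left_mono) simp_all
  ultimately show ?thesis using c gamma_pos by linarith
qed

lemma normalised_wprod_le_far:
  assumes c: "0 < c" "c \<le> 3*\<gamma>/8" and x: "7 * exp 1 < \<gamma> * t"
  shows "c * wprod a t \<le> 2 * exp 2 * \<gamma> * (\<gamma> * t) * exp (- (2 / 7) * (\<gamma> * t) / (ln (\<gamma> * t))\<^sup>2)"
proof -
  define x where "x = \<gamma> * t"
  define y where "y = a 1 * t"
  define M where "M = y / (ln y)^2"
  let ?E = "exp (- (2 / 7) * x / (ln x)\<^sup>2)"
  have "0 < \<gamma> * t" using x exp_gt_zero[of 1] by linarith
  then have t0: "0 < t" using gamma_pos by (simp add: zero_less_mult_iff)
  have yx: "x/7 \<le> y" "y \<le> x/2"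
    using a_1_ge a_le_half_gamma[of 0] t0 by (simp_all add: y_def x_def mult_right_mono)
  have ye: "exp 1 \<le> y" using x yx by (simp add: x_def)
  have y0: "0 < y" using ye by (meson exp_gt_zero less_le_trans)
  have ly: "1 \<le> ln y" using ye y0 by (simp add: ln_ge_iff)
  have lyx: "ln y \<le> ln x" using yx y0 by simp
  have "M \<le> y" using div_ln_sq_le_of_ln_ge[OF y0 _ ly] by (simp add: M_def)
  moreover have "1 \<le> x/2" using x exp_ge_add_one_self[of 1] by (simp add: x_def)
  ultimately have max_le: "max 1 M \<le> x/2" using yx by simp
  have "0 < (ln y)^2" using ly by simp
  have "(x/7)/(ln x)^2 \<le> y/(ln y)^2"
    by (intro frac_le power_mono) (use ly lyx yx y0 \<open>0 < (ln y)^2\<close> in linarith)+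
  then have exp_le': "exp (-2*M) \<le> ?E" by (simp add: M_def)
  have "wprod a t \<le> exp 4 * max 1 M * exp (-2*M)"
    using wprod_le_exp[of t] ye by (simp add: M_def y_def)
  also have "\<dots> \<le> exp 4 * (x/2) * ?E"
    using max_le exp_le' by (intro mult_mono mult_left_mono) simp_all
  finally have "c * wprod a t \<le> (3*\<gamma>/8) * (exp 4 * (x/2) * ?E)"
    using c wprod_nonneg[of t] gamma_pos by (intro mult_mono) simp_all
  also have "\<dots> = (3/16 * exp 2) * (exp 2 * \<gamma> * x * ?E)"
    by (simp flip: exp_add)
  also have "\<dots> \<le> 2 * (exp 2 * \<gamma> * x * ?E)"
    using exp_2_le_9 gamma_pos t0 by (intro mult_right_mono) (simp_all add: x_def)
  finally show ?thesis by (simp add: x_def mult_ac)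
qed

lemma normalised_wprod_tail_bound:
  assumes "c > 0" "(\<integral>t. c * wprod a t \<partial>lborel) = 1" "exp (1 / sqrt 2) / \<gamma> \<le> t"
  shows "0 \<le> c * wprod a t \<and>
    c * wprod a t \<le> 2 * (exp 1 * \<gamma>)\<^sup>2 * t * exp (- (2 / 7) * (\<gamma> * t) / (ln (\<gamma> * t))\<^sup>2)"
proof -
  have c_le: "c \<le> 3*\<gamma>/8" using normalising_constant_le[OF assms(1,2)] .
  have x: "exp (1 / sqrt 2) \<le> \<gamma> * t"
    using assms(3) gamma_pos by (simp add: divide_le_eq mult.commute)
  have bound: "c * wprod a t \<le> 2 * exp 2 * \<gamma> * (\<gamma> * t) * exp (- (2 / 7) * (\<gamma> * t) / (ln (\<gamma> * t))\<^sup>2)"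
    using normalised_wprod_le_near[OF assms(1) c_le x] normalised_wprod_le_far[OF assms(1) c_le]
    by (cases "\<gamma> * t \<le> 7 * exp 1") (simp_all add: not_le)
  have eq: "2 * (exp 1 * \<gamma>)\<^sup>2 * t = 2 * exp 2 * \<gamma> * (\<gamma> * t)"
    by (simp add: power2_eq_square mult_ac flip: exp_add)
  show ?thesis
    unfolding eq using bound mult_nonneg_nonneg[OF less_imp_le[OF assms(1)] wprod_nonneg] by blast
qed

end

theorem mainTheorem1:
  fixes \<gamma> :: real and a :: "nat \<Rightarrow> real"
  assumes "\<gamma> > 0"
    and "a 1 > 0"
    and "\<And>n. n \<ge> 2 \<Longrightarrow> a n = a 1 / (real n * (ln (real n))\<^sup>2)"
    and "(\<lambda>n. a (Suc n)) sums (\<gamma> / 2)"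
  shows "(\<forall>t. convergent_prod (\<lambda>n. (sinc (a (Suc n) * t))\<^sup>2))
    \<and> (\<forall>t. wprod a (- t) = wprod a t)
    \<and> (\<forall>t. wprod a t \<ge> 0)
    \<and> integrable lborel (wprod a)
    \<and> (\<exists>c>0. (\<integral>t. c * wprod a t \<partial>lborel) = 1)
    \<and> (\<forall>c. c > 0 \<and> (\<integral>t. c * wprod a t \<partial>lborel) = 1 \<longrightarrow>
         (\<forall>t. t \<ge> exp (1 / sqrt 2) / \<gamma> \<longrightarrow>
            0 \<le> c * wprod a t \<and>
            c * wprod a t \<le> 2 * (exp 1 * \<gamma>)\<^sup>2 * t *
               exp (- (2 / 7) * (\<gamma> * t) / (ln (\<gamma> * t))\<^sup>2)))"
proof -
  interpret sinc_product \<gamma> a by unfold_locales (use assms in auto)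
  show ?thesis
    using convergent_prod_sinc_sq wprod_minus wprod_nonneg integrable_wprod
      normalising_constant_exists normalised_wprod_tail_bound by blast
qed

end
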